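(* Let $M\in SL(N,\mathbb Z)$ be a matrix of type $\mathcal J$ with characteristic polynomial $C=B_0B_1\cdots B_k$ as in the definition of type $\mathcal J$. Then any primary Dirichlet family $\mathcal D$ for $M$ is special, i.e. the subgroup of $SL(N,\mathbb Z)$ generated by the matrices $D(M^\top)$, $D\in\mathcal D$, contains at least one matrix without eigenvalue $1$.
   Context: An integer polynomial $C$ is of type $\mathcal J$ if $C=B_0B_1\cdots B_k$ with $k\ge1$, $B_i\in\mathbb Z[t]$: $B_0$ has no real roots; each $B_i$ ($i\ge1$) is irreducible with at least one real root and at least one non-real root; for $i\ne j$, $(B_i)+(B_j)=\mathbb Z[t]$. $M$ is of type $\mathcal J$ if its characteristic polynomial is. Let $\alpha_1,\dots,\alpha_s$ be the real eigenvalues of $M$, and $\alpha_{j,1},\dots,\alpha_{j,s_j}$ the real roots of $B_j$. A Dirichlet family for $M$ is a family of $s$ polynomials $D_1,\dots,D_s\in\mathbb Z[t]$ with $D_i(M)\in SL(N,\mathbb Z)$, $D_i(\alpha_j)>0$ for all $i,j$, and the vectors $(\log D_i(\alpha_1),\dots,\log D_i(\alpha_s))$ forming a basis of $\mathbb R^s$. It is primary (w.r.t. the factorization) if it is indexed as $(D_{j,i})_{1\le j\le k,1\le i\le s_j}$ and there are $P_{j,i}\in\mathbb Z[t]$, invertible in $\mathbb Z[t]/(B_j)$, with $P_{j,i}(\alpha_{j,l})>0$ for all $i,l$ and the vectors $(\log P_{j,i}(\alpha_{j,1}),\dots,\log P_{j,i}(\alpha_{j,s_j}))$, $1\le i\le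 s_j$, a basis of $\mathbb R^{s_j}$, such that $D_{j,i}\equiv t\bmod B_0$, $D_{j,i}\equiv P_{j,i}\bmod B_j$, and $D_{j,i}\equiv1\bmod B_\mu$ for $\mu\notin\{0,j\}$. *)

theory Defs
  imports "Jordan_Normal_Form.Jordan_Normal_Form" "HOL-Computational_Algebra.Polynomial"
begin

definition poly_mat :: "'a :: comm_ring_1 poly \<Rightarrow> 'a mat \<Rightarrow> 'a mat" where
  "poly_mat p A = mat (dim_row A) (dim_col A)
     (\<lambda>(r, c). \<Sum>i\<le>degree p. coeff p i * (A ^\<^sub>m i) $$ (r, c))"

definition SL_int :: "nat \<Rightarrow> int mat set" where
  "SL_int N = {A. A \<in> carrier_mat N N \<and> det A = 1}"

inductive_set gen_group :: "nat \<Rightarrow> int mat set \<Rightarrow> int mat set" for N G where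
  gen_one: "1\<^sub>m N \<in> gen_group N G"
| gen_mult: "g \<in> G \<Longrightarrow> A \<in> gen_group N G \<Longrightarrow> g * A \<in> gen_group N G"
| gen_inv: "g \<in> G \<Longrightarrow> X \<in> carrier_mat N N \<Longrightarrow> X * g = 1\<^sub>m N \<Longrightarrow> A \<in> gen_group N G
            \<Longrightarrow> X * A \<in> gen_group N G"

definition real_roots_int :: "int poly \<Rightarrow> real set" where
  "real_roots_int B = {x. poly (map_poly of_int B) x = 0}"

definition has_nonreal_root :: "int poly \<Rightarrow> bool" where
  "has_nonreal_root B \<longleftrightarrow> (\<exists>z::complex. Im z \<noteq> 0 \<and> poly (map_poly of_int B) z = 0)"

definition comaximal :: "int poly \<Rightarrow> int poly \<Rightarrow> bool" where
  "comaximal B B' \<longleftrightarrow> (\<exists>u v. u * B + v * B' = 1)"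

definition type_J_factorization :: "int poly \<Rightarrow> nat \<Rightarrow> (nat \<Rightarrow> int poly) \<Rightarrow> bool" where
  "type_J_factorization C k B \<longleftrightarrow>
     k \<ge> 1 \<and> C = (\<Prod>i\<in>{0..k}. B i) \<and>
     real_roots_int (B 0) = {} \<and>
     (\<forall>i\<in>{1..k}. irreducible (B i) \<and> real_roots_int (B i) \<noteq> {} \<and> has_nonreal_root (B i)) \<and>
     (\<forall>i\<in>{0..k}. \<forall>j\<in>{0..k}. i \<noteq> j \<longrightarrow> comaximal (B i) (B j))"

definition real_eigenvalues :: "int mat \<Rightarrow> real set" where
  "real_eigenvalues M = {x. eigenvalue (map_mat real_of_int M) x}"

definition is_basis_family :: "'i set \<Rightarrow> 'b set \<Rightarrow> ('i \<Rightarrow> 'b \<Rightarrow> real) \<Rightarrow> bool" where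
  "is_basis_family I A v \<longleftrightarrow>
     (\<forall>w. \<exists>!c. c \<in> extensional I \<and> (\<forall>a\<in>A. w a = (\<Sum>i\<in>I. c i * v i a)))"

definition dirichlet_family :: "nat \<Rightarrow> int mat \<Rightarrow> 'i set \<Rightarrow> ('i \<Rightarrow> int poly) \<Rightarrow> bool" where
  "dirichlet_family N M I D \<longleftrightarrow>
     finite I \<and> card I = card (real_eigenvalues M) \<and>
     (\<forall>i\<in>I. poly_mat (D i) M \<in> SL_int N) \<and>
     (\<forall>i\<in>I. \<forall>\<alpha>\<in>real_eigenvalues M. poly (map_poly of_int (D i)) \<alpha> > 0) \<and>
     is_basis_family I (real_eigenvalues M) (\<lambda>i \<alpha>. ln (poly (map_poly of_int (D i)) \<alpha>))"

definition primary_index :: "nat \<Rightarrow> (nat \<Rightarrow> int poly) \<Rightarrow> (nat \<times> nat) set" where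
  "primary_index k B = {(j, i). 1 \<le> j \<and> j \<le> k \<and> 1 \<le> i \<and> i \<le> card (real_roots_int (B j))}"

definition primary_dirichlet_family ::
  "nat \<Rightarrow> int mat \<Rightarrow> nat \<Rightarrow> (nat \<Rightarrow> int poly) \<Rightarrow> (nat \<times> nat \<Rightarrow> int poly) \<Rightarrow> bool" where
  "primary_dirichlet_family N M k B D \<longleftrightarrow>
     dirichlet_family N M (primary_index k B) D \<and>
     (\<exists>P :: nat \<times> nat \<Rightarrow> int poly.
        (\<forall>j\<in>{1..k}.
           (\<forall>i\<in>{1..card (real_roots_int (B j))}.
              (\<exists>Q. B j dvd (P (j, i) * Q - 1)) \<and>
              (\<forall>\<alpha>\<in>real_roots_int (B j). poly (map_poly of_int (P (j, i))) \<alpha> > 0)) \<and>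
           is_basis_family {1..card (real_roots_int (B j))} (real_roots_int (B j))
             (\<lambda>i \<alpha>. ln (poly (map_poly of_int (P (j, i))) \<alpha>))) \<and>
        (\<forall>(j, i)\<in>primary_index k B.
           B 0 dvd (D (j, i) - [:0, 1:]) \<and>
           B j dvd (D (j, i) - P (j, i)) \<and>
           (\<forall>\<mu>\<in>{1..k}. \<mu> \<noteq> j \<longrightarrow> B \<mu> dvd (D (j, i) - 1))))"

end

theory Submission
  imports Defs "Berlekamp_Zassenhaus.Factor_Bound"
begin

text \<open>
  Put A = M^T, E_j = D_{j,1} and X = E_k(A)^{-1} ... E_2(A)^{-1} E_1(A)^k, an element of the
  generated group. Since E_2(A) ... E_k(A) X = E_1(A)^k, an eigenvalue 1 of X makes
  E_1^k - E_2 ... E_k vanish at some eigenvalue mu of A, i.e. at a root of some B_i.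
  Modulo B_0 every E_j is t, so i = 0 would give mu^k = mu^(k-1), hence a real root 0 or 1
  of B_0. For i >= 1 the congruences reduce the equation to P_{i,1}(mu)^e = 1 with e > 0; as
  B_i is irreducible, the same holds at every real root alpha of B_i, where positivity forces
  P_{i,1}(alpha) = 1. So log P_{i,1} vanishes at all real roots of B_i, which is impossible
  for a member of a basis.
\<close>


section \<open>Evaluating polynomials at matrices\<close>

lemma pow_mat_Suc_left:
  assumes "(A :: 'a :: semiring_1 mat) \<in> carrier_mat n n"
  shows "A ^\<^sub>m Suc i = A * A ^\<^sub>m i"
proof (induction i)
  case (Suc i)
  have "A ^\<^sub>m Suc (Suc i) = (A * A ^\<^sub>m i) * A" using Suc by simp
  also have "\<dots> = A * (A ^\<^sub>m i * A)" using assms by (simp add: assoc_mult_mat[of _ n n _ n _ n])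
  finally show ?case by simp
qed (use assms in simp)

lemma poly_mat_dim [simp]:
  "dim_row (poly_mat p A) = dim_row A" "dim_col (poly_mat p A) = dim_col A"
  unfolding poly_mat_def by auto

lemma poly_mat_carrier [simp]: "A \<in> carrier_mat n n \<Longrightarrow> poly_mat p A \<in> carrier_mat n n"
  unfolding carrier_mat_def by simp

lemma poly_mat_index:
  assumes "A \<in> carrier_mat n n" "r < n" "c < n" "degree p \<le> m"
  shows "poly_mat p A $$ (r, c) = (\<Sum>i\<le>m. poly.coeff p i * (A ^\<^sub>m i) $$ (r, c))"
proof -
  have "poly_mat p A $$ (r, c) = (\<Sum>i\<le>degree p. poly.coeff p i * (A ^\<^sub>m i) $$ (r, c))"
    unfolding poly_mat_def using assms by auto
  also have "\<dots> = (\<Sum>i\<le>m. poly.coeff p i * (A ^\<^sub>m i) $$ (r, c))"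
    by (rule sum.mono_neutral_left) (use assms(4) in \<open>auto simp: coeff_eq_0\<close>)
  finally show ?thesis .
qed

lemma poly_mat_0: "A \<in> carrier_mat n n \<Longrightarrow> poly_mat 0 A = 0\<^sub>m n n"
  unfolding poly_mat_def by (intro eq_matI) auto

lemma poly_mat_1: "A \<in> carrier_mat n n \<Longrightarrow> poly_mat 1 A = 1\<^sub>m n"
  unfolding poly_mat_def by (intro eq_matI) auto

lemma poly_mat_add:
  assumes A: "A \<in> carrier_mat n n"
  shows "poly_mat (p + q) A = poly_mat p A + poly_mat q A"
proof (rule eq_matI)
  fix r c assume "r < dim_row (poly_mat p A + poly_mat q A)" "c < dim_col (poly_mat p A + poly_mat q A)"
  then have rc: "r < n" "c < n" using A by auto
  let ?m = "max (degree p) (degree q)"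
  show "poly_mat (p + q) A $$ (r, c) = (poly_mat p A + poly_mat q A) $$ (r, c)"
    using poly_mat_index[OF A rc degree_add_le[of p ?m q]]
      poly_mat_index[OF A rc, of p ?m] poly_mat_index[OF A rc, of q ?m] A rc
    by (simp add: sum.distrib distrib_right)
qed (use A in auto)

lemma poly_mat_diff:
  assumes A: "A \<in> carrier_mat n n"
  shows "poly_mat (p - q) A = poly_mat p A - poly_mat q A"
proof (rule eq_matI)
  fix r c assume "r < dim_row (poly_mat p A - poly_mat q A)" "c < dim_col (poly_mat p A - poly_mat q A)"
  then have rc: "r < n" "c < n" using A by auto
  let ?m = "max (degree p) (degree q)"
  show "poly_mat (p - q) A $$ (r, c) = (poly_mat p A - poly_mat q A) $$ (r, c)"
    using poly_mat_index[OF A rc degree_diff_le[of p ?m q]]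
      poly_mat_index[OF A rc, of p ?m] poly_mat_index[OF A rc, of q ?m] A rc
    by (simp add: sum_subtractf left_diff_distrib)
qed (use A in auto)

lemma poly_mat_smult:
  assumes A: "A \<in> carrier_mat n n"
  shows "poly_mat (Polynomial.smult a p) A = a \<cdot>\<^sub>m poly_mat p A"
proof (rule eq_matI)
  fix r c assume "r < dim_row (a \<cdot>\<^sub>m poly_mat p A)" "c < dim_col (a \<cdot>\<^sub>m poly_mat p A)"
  then have rc: "r < n" "c < n" using A by auto
  show "poly_mat (Polynomial.smult a p) A $$ (r, c) = (a \<cdot>\<^sub>m poly_mat p A) $$ (r, c)"
    using poly_mat_index[OF A rc degree_smult_le] poly_mat_index[OF A rc, of p "degree p"] A rc
    by (simp add: sum_distrib_left mult.assoc)
qed (use A in auto)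

lemma poly_mat_pCons:
  assumes A: "A \<in> carrier_mat n n"
  shows "poly_mat (pCons a p) A = a \<cdot>\<^sub>m 1\<^sub>m n + A * poly_mat p A"
proof (rule eq_matI)
  fix r c assume "r < dim_row (a \<cdot>\<^sub>m 1\<^sub>m n + A * poly_mat p A)"
    "c < dim_col (a \<cdot>\<^sub>m 1\<^sub>m n + A * poly_mat p A)"
  then have r: "r < n" and c: "c < n" using A by auto
  let ?d = "degree p"
  have "(A * poly_mat p A) $$ (r, c) = (\<Sum>l<n. A $$ (r, l) * (\<Sum>i\<le>?d. poly.coeff p i * (A ^\<^sub>m i) $$ (l, c)))"
    using A r c poly_mat_index[OF A _ c order.refl]
    by (auto simp: scalar_prod_def atLeast0LessThan intro!: sum.cong)
  also have "\<dots> = (\<Sum>i\<le>?d. poly.coeff p i * (\<Sum>l<n. A $$ (r, l) * (A ^\<^sub>m i) $$ (l, c)))"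
    by (simp add: sum_distrib_left sum.swap[of _ "{..<n}"] algebra_simps)
  also have "\<dots> = (\<Sum>i\<le>?d. poly.coeff p i * (A ^\<^sub>m Suc i) $$ (r, c))"
    using A r c by (simp add: pow_mat_Suc_left[OF A] scalar_prod_def atLeast0LessThan del: pow_mat.simps)
  finally have sum_eq: "(A * poly_mat p A) $$ (r, c) = (\<Sum>i\<le>?d. poly.coeff p i * (A ^\<^sub>m Suc i) $$ (r, c))" .
  have "poly_mat (pCons a p) A $$ (r, c) = (\<Sum>i\<le>Suc ?d. poly.coeff (pCons a p) i * (A ^\<^sub>m i) $$ (r, c))"
    by (rule poly_mat_index[OF A r c degree_pCons_le])
  also have "\<dots> = a * 1\<^sub>m n $$ (r, c) + (\<Sum>i\<le>?d. poly.coeff p i * (A ^\<^sub>m Suc i) $$ (r, c))"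
    unfolding sum.atMost_Suc_shift using A r c by (simp del: pow_mat.simps(2))
  also have "\<dots> = (a \<cdot>\<^sub>m 1\<^sub>m n + A * poly_mat p A) $$ (r, c)"
    using A r c by (simp add: sum_eq del: index_mult_mat(1))
  finally show "poly_mat (pCons a p) A $$ (r, c) = (a \<cdot>\<^sub>m 1\<^sub>m n + A * poly_mat p A) $$ (r, c)" .
qed (use A in auto)

lemma poly_mat_mult:
  assumes A: "A \<in> carrier_mat n n"
  shows "poly_mat (p * q) A = poly_mat p A * poly_mat q A"
proof (induction p rule: pCons_induct)
  case 0
  then show ?case using A by (simp add: poly_mat_0 left_mult_zero_mat[of _ n n])
next
  case (pCons a p)
  have P: "poly_mat p A \<in> carrier_mat n n" and Q: "poly_mat q A \<in> carrier_mat n n"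
    using A by auto
  have "poly_mat (pCons a p * q) A = a \<cdot>\<^sub>m poly_mat q A + (0 \<cdot>\<^sub>m 1\<^sub>m n + A * (poly_mat p A * poly_mat q A))"
    by (simp add: poly_mat_add[OF A] poly_mat_smult[OF A] poly_mat_pCons[OF A] pCons.IH)
  also have "\<dots> = (a \<cdot>\<^sub>m 1\<^sub>m n + A * poly_mat p A) * poly_mat q A"
    using A P Q by (intro eq_matI)
      (auto simp: add_mult_distrib_mat[of _ n n _ _ n] assoc_mult_mat[of A n n _ n _ n])
  finally show ?case by (simp add: poly_mat_pCons[OF A])
qed

lemma poly_mat_power:
  assumes A: "A \<in> carrier_mat n n"
  shows "poly_mat (p ^ k) A = poly_mat p A ^\<^sub>m k"
  by (induction k)
    (use A in \<open>auto simp: poly_mat_1 poly_mat_mult pow_mat_Suc_left[OF poly_mat_carrier[OF A]]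
                      simp del: pow_mat.simps(2)\<close>)

lemma poly_mat_linear_char_matrix:
  assumes A: "(A :: 'a :: field mat) \<in> carrier_mat n n"
  shows "poly_mat [:-a, 1:] A = char_matrix A a"
  using poly_mat_pCons[OF A, of "-a" 1] A
  by (intro eq_matI) (auto simp: poly_mat_1 char_matrix_def)

lemma of_int_poly_mat:
  assumes A: "A \<in> carrier_mat n n"
  shows "map_mat of_int (poly_mat p A) = poly_mat (of_int_poly p) (map_mat (of_int :: int \<Rightarrow> 'a :: comm_ring_1) A)"
proof (rule eq_matI)
  fix r c assume "r < dim_row (poly_mat (of_int_poly p) (map_mat (of_int :: int \<Rightarrow> 'a) A))"
    "c < dim_col (poly_mat (of_int_poly p) (map_mat (of_int :: int \<Rightarrow> 'a) A))"
  then have rc: "r < n" "c < n" using A by auto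
  have A': "map_mat (of_int :: int \<Rightarrow> 'a) A \<in> carrier_mat n n" using A by simp
  show "map_mat of_int (poly_mat p A) $$ (r, c) = poly_mat (of_int_poly p) (map_mat (of_int :: int \<Rightarrow> 'a) A) $$ (r, c)"
    using poly_mat_index[OF A rc order.refl] poly_mat_index[OF A' rc degree_map_poly_le[of of_int p]] A rc
    by (simp add: of_int_hom.mat_hom_pow[OF A, symmetric])
qed (use A in auto)

lemma transpose_pow_mat:
  assumes A: "(A :: 'a :: comm_semiring_1 mat) \<in> carrier_mat n n"
  shows "transpose_mat A ^\<^sub>m i = transpose_mat (A ^\<^sub>m i)"
proof (induction i)
  case (Suc i)
  have "transpose_mat A ^\<^sub>m Suc i = transpose_mat (A ^\<^sub>m i) * transpose_mat A"
    using Suc by simp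
  also have "\<dots> = transpose_mat (A * A ^\<^sub>m i)"
    using A by (simp add: transpose_mult[of A n n _ n])
  finally show ?case by (simp only: pow_mat_Suc_left[OF A])
qed (use A in simp)

lemma poly_mat_transpose_mat:
  assumes A: "A \<in> carrier_mat n n"
  shows "poly_mat p (transpose_mat A) = transpose_mat (poly_mat p A)"
  using A by (intro eq_matI) (auto simp: poly_mat_def transpose_pow_mat[OF A])

lemma det_poly_mat_prod_list_linear:
  assumes A: "A \<in> carrier_mat n n"
  shows "det (poly_mat (\<Prod>a\<leftarrow>as. [:-a, 1:]) A) = (\<Prod>a\<leftarrow>as. det (char_matrix A a))"
proof (induction as)
  case (Cons a as)
  have "poly_mat (\<Prod>a\<leftarrow>a # as. [:-a, 1:]) A = char_matrix A a * poly_mat (\<Prod>a\<leftarrow>as. [:-a, 1:]) A"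
    by (simp only: list.map prod_list.Cons poly_mat_mult[OF A] poly_mat_linear_char_matrix[OF A])
  then show ?case using Cons A by (simp add: det_mult[of _ n])
qed (use A in \<open>simp add: poly_mat_1\<close>)

section \<open>Eigenvalues and polynomial identities\<close>

lemma singular_poly_mat_imp_root_eigenvalue:
  fixes A :: "complex mat" and F :: "complex poly"
  assumes A: "A \<in> carrier_mat n n" and singular: "det (poly_mat F A) = 0"
  obtains \<mu> where "eigenvalue A \<mu>" "poly F \<mu> = 0"
proof (cases "F = 0")
  case True
  have "n \<noteq> 0"
  proof
    assume "n = 0"
    then have "poly_mat F A = 1\<^sub>m 0" using A by (intro eq_matI) auto
    then show False using singular by simp
  qed
  moreover obtain as where cp: "char_poly A = (\<Prod>a\<leftarrow>as. [:-a, 1:])" and "length as = n"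
    using char_poly_factorized[OF A] by blast
  ultimately obtain a where "a \<in> set as"
    by (cases as) auto
  then have "eigenvalue A a"
    by (simp add: eigenvalue_root_char_poly[OF A] cp poly_prod_list)
  then show thesis using that True by simp
next
  case False
  obtain as where F: "F = Polynomial.smult (lead_coeff F) (\<Prod>a\<leftarrow>as. [:-a, 1:])"
    using fundamental_theorem_algebra_factorized[of F] by metis
  have "poly_mat F A = lead_coeff F \<cdot>\<^sub>m poly_mat (\<Prod>a\<leftarrow>as. [:-a, 1:]) A"
    by (subst F) (rule poly_mat_smult[OF A])
  then have "det (poly_mat F A) = lead_coeff F ^ n * (\<Prod>a\<leftarrow>as. det (char_matrix A a))"
    using A by (simp only: det_smult det_poly_mat_prod_list_linear[OF A]) simp
  with singular False obtain a where "a \<in> set as" "det (char_matrix A a) = 0"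
    by auto
  moreover from \<open>a \<in> set as\<close> have "poly F a = 0"
    by (subst F) (simp add: poly_prod_list)
  ultimately show thesis using that eigenvalue_det[OF A] by blast
qed

lemma eigenvalue_1_imp_root_eigenvalue:
  fixes A X :: "complex mat" and f h :: "complex poly"
  assumes A: "A \<in> carrier_mat n n" and X: "X \<in> carrier_mat n n"
    and HX: "poly_mat h A * X = poly_mat f A" and "eigenvalue X 1"
  obtains \<mu> where "eigenvalue A \<mu>" "poly f \<mu> = poly h \<mu>"
proof -
  have H: "poly_mat h A \<in> carrier_mat n n" using A by simp
  have "poly_mat (f - h) A = poly_mat h A * X + (-1) \<cdot>\<^sub>m poly_mat h A"
    using A by (intro eq_matI) (auto simp: poly_mat_diff HX[symmetric])
  also have "\<dots> = poly_mat h A * char_matrix X 1"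
    using H X by (simp add: char_matrix_def mult_add_distrib_mat[OF H] mult_smult_distrib[OF H one_carrier_mat]
      right_mult_one_mat[OF H])
  finally have "det (poly_mat (f - h) A) = det (poly_mat h A) * det (char_matrix X 1)"
    using H X by (simp add: det_mult[of _ n])
  also have "det (char_matrix X 1) = 0"
    using \<open>eigenvalue X 1\<close> eigenvalue_det[OF X] by simp
  finally have "det (poly_mat (f - h) A) = 0" by simp
  then obtain \<mu> where "eigenvalue A \<mu>" "poly (f - h) \<mu> = 0"
    by (rule singular_poly_mat_imp_root_eigenvalue[OF A])
  then show thesis using that by simp
qed

lemma eigenvalue_of_int_transpose_imp_root_char_poly:
  assumes "M \<in> carrier_mat n n" and "eigenvalue (map_mat complex_of_int (transpose_mat M)) \<mu>"
  shows "poly (of_int_poly (char_poly M)) \<mu> = 0"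
proof -
  have "char_poly (map_mat complex_of_int (transpose_mat M)) = of_int_poly (char_poly M)"
    using assms(1) by (simp add: map_mat_transpose of_int_hom.char_poly_hom)
  then show ?thesis
    using assms eigenvalue_root_char_poly[of "map_mat complex_of_int (transpose_mat M)" n] by simp
qed

section \<open>Telescoping products in the generated group\<close>

lemma adj_mat_inverse_if_det_1:
  assumes "A \<in> carrier_mat n n" "det A = 1"
  shows "A * adj_mat A = 1\<^sub>m n" "adj_mat A * A = 1\<^sub>m n"
  using adj_mat[OF assms(1)] assms(2) by auto

lemma gen_group_pow_mat:
  assumes "g \<in> G" "g \<in> carrier_mat N N"
  shows "g ^\<^sub>m i \<in> gen_group N G"
proof (induction i)
  case (Suc i)
  then show ?case
    using gen_group.gen_mult[OF assms(1) Suc] by (simp add: pow_mat_Suc_left[OF assms(2)] del: pow_mat.simps(2))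
qed (use assms in \<open>auto intro: gen_group.gen_one\<close>)

lemma gen_group_foldl_inverses:
  assumes "Y \<in> gen_group N G" "\<forall>x\<in>set xs. g x \<in> G \<and> V x \<in> carrier_mat N N \<and> V x * g x = 1\<^sub>m N"
  shows "foldl (\<lambda>Z x. V x * Z) Y xs \<in> gen_group N G"
  using assms by (induction xs arbitrary: Y) (auto intro: gen_group.gen_inv)

lemma foldl_mult_carrier_mat:
  "Y \<in> carrier_mat n n \<Longrightarrow> \<forall>x\<in>set xs. V x \<in> carrier_mat n n \<Longrightarrow> foldl (\<lambda>Z x. V x * Z) Y xs \<in> carrier_mat n n"
  by (induction xs arbitrary: Y) auto

lemma poly_mat_prod_list_mult_foldl_inverses:
  assumes A: "A \<in> carrier_mat n n"
    and "\<forall>x\<in>set xs. V x \<in> carrier_mat n n \<and> poly_mat (p x) A * V x = 1\<^sub>m n"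
  shows "Y \<in> carrier_mat n n \<Longrightarrow> poly_mat (\<Prod>x\<leftarrow>xs. p x) A * foldl (\<lambda>Z x. V x * Z) Y xs = Y"
  using assms(2)
proof (induction xs arbitrary: Y)
  case Nil
  then show ?case using A by (simp add: poly_mat_1)
next
  case (Cons x xs)
  let ?P = "poly_mat (p x) A" and ?Q = "poly_mat (\<Prod>x\<leftarrow>xs. p x) A"
  have VY: "V x * Y \<in> carrier_mat n n" using Cons.prems by auto
  have W: "foldl (\<lambda>Z x. V x * Z) (V x * Y) xs \<in> carrier_mat n n"
    using Cons.prems by (intro foldl_mult_carrier_mat VY) auto
  have "poly_mat (\<Prod>x\<leftarrow>x # xs. p x) A * foldl (\<lambda>Z x. V x * Z) Y (x # xs)
      = ?P * (?Q * foldl (\<lambda>Z x. V x * Z) (V x * Y) xs)"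
    using A W by (simp add: poly_mat_mult[OF A] assoc_mult_mat[of _ n n _ n _ n])
  also have "\<dots> = ?P * (V x * Y)"
    using Cons.IH[OF VY] Cons.prems by simp
  also have "\<dots> = (?P * V x) * Y"
    using Cons.prems A by (intro assoc_mult_mat[symmetric]) auto
  also have "\<dots> = Y" using Cons.prems by simp
  finally show ?case .
qed

lemma gen_group_element_without_eigenvalue_1:
  fixes A :: "int mat" and E :: "nat \<Rightarrow> int poly"
  assumes A: "A \<in> carrier_mat N N" and "k \<ge> 1"
    and gens: "\<And>j. j \<in> {1..k} \<Longrightarrow> poly_mat (E j) A \<in> Gs \<and> det (poly_mat (E j) A) = 1"
    and separates: "\<And>\<mu>. eigenvalue (map_mat of_int A) \<mu> \<Longrightarrow>
      poly (of_int_poly (E 1 ^ k)) \<mu> \<noteq> poly (of_int_poly (\<Prod>j\<leftarrow>[2..<Suc k]. E j)) (\<mu> :: complex)"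
  shows "\<exists>X \<in> gen_group N Gs. \<not> eigenvalue (map_mat complex_of_int X) 1"
proof -
  define G where "G j = poly_mat (E j) A" for j
  define X where "X = foldl (\<lambda>Y j. adj_mat (G j) * Y) (G 1 ^\<^sub>m k) [2..<Suc k]"
  have G: "G j \<in> Gs" "G j \<in> carrier_mat N N" "adj_mat (G j) \<in> carrier_mat N N"
    "G j * adj_mat (G j) = 1\<^sub>m N" "adj_mat (G j) * G j = 1\<^sub>m N" if "j \<in> {1..k}" for j
    using gens[OF that] A adj_mat_inverse_if_det_1[of "G j" N] adj_mat(1)[of "G j" N]
    unfolding G_def by auto
  have G1: "G 1 \<in> Gs" "G 1 \<in> carrier_mat N N" using G \<open>k \<ge> 1\<close> by auto
  have X: "X \<in> gen_group N Gs" unfolding X_def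
    by (rule gen_group_foldl_inverses[where g = G, OF gen_group_pow_mat[OF G1]]) (use G in auto)
  moreover have "\<not> eigenvalue (map_mat complex_of_int X) 1"
  proof
    assume "eigenvalue (map_mat complex_of_int X) 1"
    define h where "h = (\<Prod>j\<leftarrow>[2..<Suc k]. E j)"
    define f where "f = E 1 ^ k"
    have XN: "X \<in> carrier_mat N N" unfolding X_def
      by (rule foldl_mult_carrier_mat) (use G G1 in auto)
    have "poly_mat h A * X = poly_mat f A"
      unfolding X_def h_def f_def poly_mat_power[OF A] G_def[symmetric]
      by (rule poly_mat_prod_list_mult_foldl_inverses[OF A]) (use G G1 in \<open>auto simp: G_def\<close>)
    then have "map_mat of_int (poly_mat h A) * map_mat of_int X = map_mat (of_int :: int \<Rightarrow> complex) (poly_mat f A)"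
      by (metis of_int_hom.mat_hom_mult[OF poly_mat_carrier[OF A] XN])
    then have HX: "poly_mat (of_int_poly h) (map_mat of_int A) * map_mat of_int X
        = poly_mat (of_int_poly f) (map_mat (of_int :: int \<Rightarrow> complex) A)"
      unfolding of_int_poly_mat[OF A] .
    have "map_mat complex_of_int A \<in> carrier_mat N N" "map_mat complex_of_int X \<in> carrier_mat N N"
      using A XN by auto
    then obtain \<mu> :: complex where "eigenvalue (map_mat of_int A) \<mu>" "poly (of_int_poly f) \<mu> = poly (of_int_poly h) \<mu>"
      using eigenvalue_1_imp_root_eigenvalue[OF _ _ HX \<open>eigenvalue (map_mat complex_of_int X) 1\<close>] by blast
    then show False using separates unfolding f_def h_def by blast
  qed
  ultimately show ?thesis by blast
qed

section \<open>Roots of the factors of a type J polynomial\<close>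

lemma poly_of_int_poly_eq_if_dvd_diff:
  assumes "B dvd X - Y" and "poly (of_int_poly B) (\<mu> :: 'a :: comm_ring_1) = 0"
  shows "poly (of_int_poly X) \<mu> = poly (of_int_poly Y) \<mu>"
proof -
  from assms(1) obtain Q where "X = Y + B * Q"
    by (metis add_diff_cancel_left' add_diff_eq dvdE)
  then show ?thesis using assms(2) by (simp add: of_int_poly_hom.hom_add of_int_poly_hom.hom_mult)
qed

lemma poly_of_int_poly_prod_list_upt:
  "poly (of_int_poly (\<Prod>j\<leftarrow>[m..<Suc n]. f j)) (\<mu> :: 'a :: comm_ring_1)
    = (\<Prod>j\<in>{m..n}. poly (of_int_poly (f j)) \<mu>)"
proof -
  have "poly (of_int_poly (\<Prod>j\<leftarrow>js. f j)) \<mu> = (\<Prod>j\<leftarrow>js. poly (of_int_poly (f j)) \<mu>)" for js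
    by (simp add: of_int_poly_hom.hom_prod_list poly_prod_list o_def)
  then show ?thesis
    using prod.distinct_set_conv_list[of "[m..<Suc n]" "\<lambda>j. poly (of_int_poly (f j)) \<mu>"]
    by (simp add: atLeastLessThanSuc_atLeastAtMost del: upt_Suc)
qed

lemma of_rat_of_int_poly: "map_poly of_rat (of_int_poly p) = (of_int_poly p :: 'a :: field_char_0 poly)"
  by (subst map_poly_map_poly) (auto simp: o_def)

lemma irreducible_int_poly_common_root:
  fixes B G :: "int poly" and \<alpha> :: "'a :: field_char_0" and \<mu> :: "'b :: field_char_0"
  assumes irr: "irreducible B" and B\<alpha>: "poly (of_int_poly B) \<alpha> = 0"
    and B\<mu>: "poly (of_int_poly B) \<mu> = 0" and G\<mu>: "poly (of_int_poly G) \<mu> = 0"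
  shows "poly (of_int_poly G) \<alpha> = 0"
proof -
  have "degree B \<noteq> 0"
  proof
    assume "degree B = 0"
    then obtain c where "B = [:c:]" by (metis degree_eq_zeroE)
    then show False using B\<alpha> irr by (cases "c = 0") auto
  qed
  then have "irreducible\<^sub>d B"
    using irreducible_primitive_connect[OF irreducible_imp_primitive] irr by auto
  then have irr_rat: "irreducible (of_int_poly B :: rat poly)"
    using irreducible\<^sub>d_int_rat by auto
  interpret \<alpha>_hom: map_poly_comm_ring_hom "of_rat :: rat \<Rightarrow> 'a" ..
  interpret \<mu>_hom: map_poly_comm_ring_hom "of_rat :: rat \<Rightarrow> 'b" ..
  define g where "g = gcd (of_int_poly B) (of_int_poly G :: rat poly)"
  have "g dvd of_int_poly B" unfolding g_def by simp
  then consider "of_int_poly B dvd g" | "is_unit g" using irreducibleD'[OF irr_rat] by blast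
  then show ?thesis
  proof cases
    case 1
    then have "of_int_poly B dvd (of_int_poly G :: rat poly)"
      unfolding g_def using dvd_trans gcd_dvd2 by blast
    then obtain h where "of_int_poly G = of_int_poly B * (h :: rat poly)" by (elim dvdE)
    then have "of_int_poly G = of_int_poly B * map_poly (of_rat :: rat \<Rightarrow> 'a) h"
      by (metis \<alpha>_hom.hom_mult of_rat_of_int_poly)
    then show ?thesis using B\<alpha> by simp
  next
    case 2
    obtain x y where xy: "x * of_int_poly B + y * of_int_poly G = g"
      using bezout_coefficients_fst_snd unfolding g_def by blast
    then have "map_poly (of_rat :: rat \<Rightarrow> 'b) g = map_poly of_rat x * of_int_poly B + map_poly of_rat y * of_int_poly G"
      by (metis \<mu>_hom.hom_add \<mu>_hom.hom_mult of_rat_of_int_poly)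
    then have "poly (map_poly (of_rat :: rat \<Rightarrow> 'b) g) \<mu> = 0" using B\<mu> G\<mu> by simp
    moreover obtain c where "g = [:c:]" "c \<noteq> 0"
      using 2 by (metis is_unit_polyE' monom_0)
    ultimately show ?thesis by simp
  qed
qed

lemma irreducible_int_poly_power_ne_1:
  fixes B P :: "int poly" and \<alpha> :: "'a :: linordered_field" and \<mu> :: "'b :: field_char_0"
  assumes irr: "irreducible B" and B\<alpha>: "poly (of_int_poly B) \<alpha> = 0"
    and pos: "poly (of_int_poly P) \<alpha> > 0" and ne1: "poly (of_int_poly P) \<alpha> \<noteq> 1"
    and B\<mu>: "poly (of_int_poly B) \<mu> = 0" and "e > 0"
  shows "poly (of_int_poly P) \<mu> ^ e \<noteq> 1"
proof
  assume "poly (of_int_poly P) \<mu> ^ e = 1"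
  then have "poly (of_int_poly (P ^ e - 1)) \<mu> = 0"
    by (simp add: of_int_poly_hom.hom_minus of_int_poly_hom.hom_power)
  then have "poly (of_int_poly (P ^ e - 1)) \<alpha> = 0"
    by (rule irreducible_int_poly_common_root[OF irr B\<alpha> B\<mu>])
  then have "poly (of_int_poly P) \<alpha> ^ e = 1 ^ e"
    by (simp add: of_int_poly_hom.hom_minus of_int_poly_hom.hom_power)
  then show False
    using power_eq_iff_eq_base[OF \<open>e > 0\<close>, of "poly (of_int_poly P) \<alpha>" 1] pos ne1 by simp
qed

lemma is_basis_family_nonzero:
  assumes basis: "is_basis_family I A v" and i: "i \<in> I"
  shows "\<exists>a\<in>A. v i a \<noteq> 0"
proof (rule ccontr)
  assume "\<not> ?thesis"
  then have zero: "v i a = 0" if "a \<in> A" for a using that by blast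
  define rep where "rep c \<longleftrightarrow> c \<in> extensional I \<and> (\<forall>a\<in>A. (0::real) = (\<Sum>j\<in>I. c j * v j a))" for c
  define c0 :: "_ \<Rightarrow> real" where "c0 = restrict (\<lambda>_. 0) I"
  define c1 :: "_ \<Rightarrow> real" where "c1 = restrict (\<lambda>j. if j = i then 1 else 0) I"
  have "\<exists>!c. rep c" using basis unfolding is_basis_family_def rep_def by (rule allE)
  moreover have "rep c0" unfolding rep_def c0_def by simp
  moreover have "rep c1" unfolding rep_def
  proof (intro conjI ballI)
    fix a assume "a \<in> A"
    have "(\<Sum>j\<in>I. c1 j * v j a) = (\<Sum>j\<in>I. if j = i then v i a else 0)"
      unfolding c1_def by (intro sum.cong) auto
    also have "\<dots> = 0" using zero \<open>a \<in> A\<close> by (cases "finite I") auto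
    finally show "0 = (\<Sum>j\<in>I. c1 j * v j a)" by simp
  qed (simp add: c1_def)
  ultimately have "c0 = c1" by blast
  then have "c0 i = c1 i" by simp
  then show False using i unfolding c0_def c1_def by simp
qed

lemma type_J_factorization_root:
  assumes "type_J_factorization C k B" and "poly (of_int_poly C) (\<mu> :: 'a :: idom) = 0"
  obtains i where "i \<in> {0..k}" "poly (of_int_poly (B i)) \<mu> = 0"
  using assms unfolding type_J_factorization_def
  by (auto simp: of_int_poly_hom.hom_prod poly_prod prod_zero_iff)

lemma type_J_factorization_no_integer_root_0:
  assumes "type_J_factorization C k B"
  shows "poly (of_int_poly (B 0)) (of_int c :: 'a :: {comm_ring_1, ring_char_0}) \<noteq> 0"
proof
  assume "poly (of_int_poly (B 0)) (of_int c :: 'a) = 0"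
  then have "poly (B 0) c = 0"
    by (simp add: of_int_hom.poly_map_poly)
  then have "real_of_int c \<in> real_roots_int (B 0)"
    unfolding real_roots_int_def by (simp add: of_int_hom.poly_map_poly)
  then show False
    using assms unfolding type_J_factorization_def by auto
qed

lemma type_J_factorization_first_index:
  assumes "type_J_factorization C k B" and "j \<in> {1..k}"
  shows "(j, 1) \<in> primary_index k B"
proof -
  have irr: "irreducible (B j)" and "real_roots_int (B j) \<noteq> {}"
    using assms unfolding type_J_factorization_def by auto
  moreover have "finite (real_roots_int (B j))"
    unfolding real_roots_int_def using irr by (intro poly_roots_finite) auto
  ultimately show ?thesis
    using assms(2) unfolding primary_index_def by (auto simp: Suc_le_eq card_gt_0_iff)
qed

lemma primary_dirichlet_familyE:
  assumes J: "type_J_factorization C k B" and "primary_dirichlet_family N M k B D"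
  obtains P where
    "\<And>j. j \<in> {1..k} \<Longrightarrow> B 0 dvd D (j, 1) - [:0, 1:]"
    "\<And>j. j \<in> {1..k} \<Longrightarrow> B j dvd D (j, 1) - P j"
    "\<And>j l. j \<in> {1..k} \<Longrightarrow> l \<in> {1..k} \<Longrightarrow> l \<noteq> j \<Longrightarrow> B l dvd D (j, 1) - 1"
    "\<And>j e \<mu>. j \<in> {1..k} \<Longrightarrow> e > 0 \<Longrightarrow> poly (of_int_poly (B j)) (\<mu> :: complex) = 0
      \<Longrightarrow> poly (of_int_poly (P j)) \<mu> ^ e \<noteq> 1"
proof -
  from assms(2) obtain P :: "nat \<times> nat \<Rightarrow> int poly" where
    P: "\<forall>j\<in>{1..k}.
           (\<forall>i\<in>{1..card (real_roots_int (B j))}.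
              (\<exists>Q. B j dvd (P (j, i) * Q - 1)) \<and>
              (\<forall>\<alpha>\<in>real_roots_int (B j). poly (of_int_poly (P (j, i))) \<alpha> > 0)) \<and>
           is_basis_family {1..card (real_roots_int (B j))} (real_roots_int (B j))
             (\<lambda>i \<alpha>. ln (poly (of_int_poly (P (j, i))) \<alpha>))"
    and D: "\<forall>(j, i)\<in>primary_index k B.
           B 0 dvd (D (j, i) - [:0, 1:]) \<and> B j dvd (D (j, i) - P (j, i)) \<and>
           (\<forall>\<mu>\<in>{1..k}. \<mu> \<noteq> j \<longrightarrow> B \<mu> dvd (D (j, i) - 1))"
    unfolding primary_dirichlet_family_def by blast
  have index: "(j, 1) \<in> primary_index k B" if "j \<in> {1..k}" for j
    using type_J_factorization_first_index[OF J that] .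
  have "poly (of_int_poly (P (j, 1))) \<mu> ^ e \<noteq> 1"
    if j: "j \<in> {1..k}" and "e > 0" and B\<mu>: "poly (of_int_poly (B j)) (\<mu> :: complex) = 0" for j e \<mu>
  proof -
    have "1 \<in> {1..card (real_roots_int (B j))}"
      using index[OF j] unfolding primary_index_def by auto
    then obtain \<alpha> where \<alpha>: "\<alpha> \<in> real_roots_int (B j)" and ln: "ln (poly (of_int_poly (P (j, 1))) \<alpha>) \<noteq> 0"
      and pos: "poly (of_int_poly (P (j, 1))) \<alpha> > 0"
      using P j is_basis_family_nonzero by fastforce
    have irr: "irreducible (B j)" using J j unfolding type_J_factorization_def by auto
    from ln have "poly (of_int_poly (P (j, 1))) \<alpha> \<noteq> 1" by auto
    with \<alpha> show ?thesis
      using irreducible_int_poly_power_ne_1[OF irr _ pos _ B\<mu> \<open>e > 0\<close>]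
      unfolding real_roots_int_def by auto
  qed
  with D index show thesis
    by (intro that[of "\<lambda>j. P (j, 1)"]) fastforce+
qed

lemma primary_dirichlet_family_separates_roots:
  assumes J: "type_J_factorization C k B" and PD: "primary_dirichlet_family N M k B D"
    and C\<mu>: "poly (of_int_poly C) (\<mu> :: complex) = 0"
  shows "poly (of_int_poly (D (1, 1) ^ k)) \<mu> \<noteq> poly (of_int_poly (\<Prod>j\<leftarrow>[2..<Suc k]. D (j, 1))) \<mu>"
proof -
  obtain P where D0: "\<And>j. j \<in> {1..k} \<Longrightarrow> B 0 dvd D (j, 1) - [:0, 1:]"
    and Dj: "\<And>j. j \<in> {1..k} \<Longrightarrow> B j dvd D (j, 1) - P j"
    and Dl: "\<And>j l. j \<in> {1..k} \<Longrightarrow> l \<in> {1..k} \<Longrightarrow> l \<noteq> j \<Longrightarrow> B l dvd D (j, 1) - 1"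
    and P: "\<And>j e \<mu>. j \<in> {1..k} \<Longrightarrow> e > 0 \<Longrightarrow> poly (of_int_poly (B j)) (\<mu> :: complex) = 0
      \<Longrightarrow> poly (of_int_poly (P j)) \<mu> ^ e \<noteq> 1"
    using primary_dirichlet_familyE[OF J PD] by blast
  obtain i where i: "i \<in> {0..k}" and B\<mu>: "poly (of_int_poly (B i)) \<mu> = 0"
    using type_J_factorization_root[OF J C\<mu>] .
  have "k > 0" using J unfolding type_J_factorization_def by simp
  define v where "v j = poly (of_int_poly (D (j, 1))) \<mu>" for j
  have "poly (of_int_poly (\<Prod>j\<leftarrow>[2..<Suc k]. D (j, 1))) \<mu> = (\<Prod>j\<in>{2..k}. v j)"
    unfolding v_def by (rule poly_of_int_poly_prod_list_upt)
  moreover have "poly (of_int_poly (D (1, 1) ^ k)) \<mu> = v 1 ^ k"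
    by (simp add: v_def of_int_poly_hom.hom_power)
  moreover have "v 1 ^ k \<noteq> (\<Prod>j\<in>{2..k}. v j)"
  proof (cases "i = 0")
    case True
    have "v j = \<mu>" if "j \<in> {1..k}" for j
      using poly_of_int_poly_eq_if_dvd_diff[OF D0[OF that]] B\<mu> True by (simp add: v_def)
    moreover have "\<mu> \<noteq> of_int 0" "\<mu> \<noteq> of_int 1"
      using type_J_factorization_no_integer_root_0[OF J] B\<mu> True by metis+
    ultimately show ?thesis
      using \<open>k > 0\<close> by (cases k) (auto simp: power_0_left)
  next
    case False
    then have i: "i \<in> {1..k}" using i by auto
    have v_i: "v i = poly (of_int_poly (P i)) \<mu>"
      using poly_of_int_poly_eq_if_dvd_diff[OF Dj[OF i]] B\<mu> by (simp add: v_def)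
    have v_other: "v j = 1" if "j \<in> {1..k}" "j \<noteq> i" for j
      using poly_of_int_poly_eq_if_dvd_diff[OF Dl[OF that(1) i that(2)[symmetric]]] B\<mu> by (simp add: v_def)
    show ?thesis
    proof (cases "i = 1")
      case True
      have "(\<Prod>j\<in>{2..k}. v j) = 1" using v_other True by (intro prod.neutral) auto
      then show ?thesis using P[OF i \<open>k > 0\<close> B\<mu>] v_i True by simp
    next
      case False
      have "(\<Prod>j\<in>{2..k}. v j) = v i"
        using v_other i False by (subst prod.remove[of _ i]) (auto intro!: prod.neutral)
      then show ?thesis using P[OF i _ B\<mu>, of 1] v_i v_other[of 1] i False by simp
    qed
  qed
  ultimately show ?thesis by simp
qed

theorem proposition6p12:
  fixes N k :: nat and M :: "int mat" and B :: "nat \<Rightarrow> int poly"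
    and D :: "nat \<times> nat \<Rightarrow> int poly"
  assumes "M \<in> SL_int N"
    and "type_J_factorization (char_poly M) k B"
    and "primary_dirichlet_family N M k B D"
  shows "\<exists>X \<in> gen_group N ((\<lambda>ji. poly_mat (D ji) (transpose_mat M)) ` primary_index k B).
           \<not> eigenvalue (map_mat complex_of_int X) 1"
proof (rule gen_group_element_without_eigenvalue_1[where E = "\<lambda>j. D (j, 1)"])
  have M: "M \<in> carrier_mat N N" using assms(1) unfolding SL_int_def by auto
  then show "transpose_mat M \<in> carrier_mat N N" by simp
  show "k \<ge> 1" using assms(2) unfolding type_J_factorization_def by simp
  fix j assume "j \<in> {1..k}"
  then have index: "(j, 1) \<in> primary_index k B"
    by (rule type_J_factorization_first_index[OF assms(2)])
  then have "det (poly_mat (D (j, 1)) M) = 1"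
    using assms(3) unfolding primary_dirichlet_family_def dirichlet_family_def SL_int_def by auto
  with index M show "poly_mat (D (j, 1)) (transpose_mat M) \<in> (\<lambda>ji. poly_mat (D ji) (transpose_mat M)) ` primary_index k B
      \<and> det (poly_mat (D (j, 1)) (transpose_mat M)) = 1"
    by (auto simp: poly_mat_transpose_mat det_transpose[OF poly_mat_carrier[OF M]])
next
  fix \<mu> assume "eigenvalue (map_mat complex_of_int (transpose_mat M)) \<mu>"
  then have "poly (of_int_poly (char_poly M)) \<mu> = 0"
    using assms(1) unfolding SL_int_def by (auto intro: eigenvalue_of_int_transpose_imp_root_char_poly)
  then show "poly (of_int_poly (D (1, 1) ^ k)) \<mu> \<noteq> poly (of_int_poly (\<Prod>j\<leftarrow>[2..<Suc k]. D (j, 1))) \<mu>"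
    by (rule primary_dirichlet_family_separates_roots[OF assms(2,3)])
qed

end
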